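(* Let $(G,v)$ be a Hamel space over an ordered field $C$ and $G_0\subseteq G$ a $C$-linear subspace. For any $c_1,\dots,c_m\in G\setminus G_0$, \[\#\Big(v\big(G_0+\textstyle\sum_{i=1}^mCc_i\big)\setminus v(G_0)\Big)\le m.\] In particular, there are $n\le m$ and distinct $d_1,\dots,d_n\in v(G_0+\sum_{i=1}^mCc_i)\setminus v(G_0)$ such that $v(G_0+\sum_{i=1}^mCc_i)\subseteq v(G_0)\cup\{d_1,\dots,d_n\}$.
   Context: Let $C$ be an ordered field. A $2$-ordered $C$-vector space is a $C$-vector space $G$ with two total orderings $<_0,<_1$ such that $G$ is an ordered $C$-vector space with respect to each. Put $G_\infty=G\cup\{\infty\}$, with $G<_0\infty$, $G<_1\infty$. A Hamel valuation on $G$ is a map $v:G\to G_\infty$ such that for all $x,y\in G$ and $\lambda\in C^{\times}$: $v(x)=\infty$ iff $x=0$; $v(x+y)\ge_0\min_0(v(x),v(y))$; $v(\lambda x)=v(x)$; if $0<_1x<_1y$ then $v(x)\ge_0v(y)$; $v(v(x))=v(x)$ (with $v(\infty)=\infty$); and $v(x)>_10$. A Hamel space is such a pair $(G,v)$. *)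

theory Defs
  imports Main "HOL.Vector_Spaces"
begin

text \<open>G_infinity is 'g option, with None playing the role of infinity.\<close>

definition strict_total_order :: "('g \<Rightarrow> 'g \<Rightarrow> bool) \<Rightarrow> bool" where
  "strict_total_order lt \<longleftrightarrow>
     (\<forall>x. \<not> lt x x) \<and> (\<forall>x y z. lt x y \<longrightarrow> lt y z \<longrightarrow> lt x z) \<and>
     (\<forall>x y. lt x y \<or> x = y \<or> lt y x)"

definition ordered_vs ::
  "('c::linordered_field \<Rightarrow> 'g::ab_group_add \<Rightarrow> 'g) \<Rightarrow> ('g \<Rightarrow> 'g \<Rightarrow> bool) \<Rightarrow> bool" where
  "ordered_vs scale lt \<longleftrightarrow> vector_space scale \<and> strict_total_order lt \<and>
     (\<forall>x y z. lt x y \<longrightarrow> lt (x + z) (y + z)) \<and>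
     (\<forall>a x. 0 < a \<longrightarrow> lt 0 x \<longrightarrow> lt 0 (scale a x))"

definition two_ordered_vs ::
  "('c::linordered_field \<Rightarrow> 'g::ab_group_add \<Rightarrow> 'g) \<Rightarrow> ('g \<Rightarrow> 'g \<Rightarrow> bool) \<Rightarrow> ('g \<Rightarrow> 'g \<Rightarrow> bool) \<Rightarrow> bool" where
  "two_ordered_vs scale lt0 lt1 \<longleftrightarrow> ordered_vs scale lt0 \<and> ordered_vs scale lt1"

fun ext_lt :: "('g \<Rightarrow> 'g \<Rightarrow> bool) \<Rightarrow> 'g option \<Rightarrow> 'g option \<Rightarrow> bool" where
  "ext_lt lt (Some x) (Some y) = lt x y"
| "ext_lt lt (Some x) None = True"
| "ext_lt lt None _ = False"

definition ext_le :: "('g \<Rightarrow> 'g \<Rightarrow> bool) \<Rightarrow> 'g option \<Rightarrow> 'g option \<Rightarrow> bool" where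
  "ext_le lt a b \<longleftrightarrow> ext_lt lt a b \<or> a = b"

definition ext_min :: "('g \<Rightarrow> 'g \<Rightarrow> bool) \<Rightarrow> 'g option \<Rightarrow> 'g option \<Rightarrow> 'g option" where
  "ext_min lt a b = (if ext_le lt a b then a else b)"

definition ext_v :: "('g \<Rightarrow> 'g option) \<Rightarrow> 'g option \<Rightarrow> 'g option" where
  "ext_v v a = (case a of None \<Rightarrow> None | Some x \<Rightarrow> v x)"

definition hamel_valuation ::
  "('c::linordered_field \<Rightarrow> 'g::ab_group_add \<Rightarrow> 'g) \<Rightarrow> ('g \<Rightarrow> 'g \<Rightarrow> bool) \<Rightarrow> ('g \<Rightarrow> 'g \<Rightarrow> bool)
     \<Rightarrow> ('g \<Rightarrow> 'g option) \<Rightarrow> bool" where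
  "hamel_valuation scale lt0 lt1 v \<longleftrightarrow>
     (\<forall>x. v x = None \<longleftrightarrow> x = 0) \<and>
     (\<forall>x y. ext_le lt0 (ext_min lt0 (v x) (v y)) (v (x + y))) \<and>
     (\<forall>a x. a \<noteq> 0 \<longrightarrow> v (scale a x) = v x) \<and>
     (\<forall>x y. lt1 0 x \<longrightarrow> lt1 x y \<longrightarrow> ext_le lt0 (v y) (v x)) \<and>
     (\<forall>x. ext_v v (v x) = v x) \<and>
     (\<forall>x. ext_lt lt1 (Some 0) (v x))"

definition hamel_space ::
  "('c::linordered_field \<Rightarrow> 'g::ab_group_add \<Rightarrow> 'g) \<Rightarrow> ('g \<Rightarrow> 'g \<Rightarrow> bool) \<Rightarrow> ('g \<Rightarrow> 'g \<Rightarrow> bool)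
     \<Rightarrow> ('g \<Rightarrow> 'g option) \<Rightarrow> bool" where
  "hamel_space scale lt0 lt1 v \<longleftrightarrow>
     two_ordered_vs scale lt0 lt1 \<and> hamel_valuation scale lt0 lt1 v"

end

theory Submission
  imports Defs
begin

text \<open>If \<open>v x \<noteq> v y\<close>, then \<open>v (x + y)\<close> is one of \<open>v x\<close>, \<open>v y\<close>. Hence adjoining one vector \<open>c\<close>
to a subspace \<open>H\<close> creates at most one new value: if \<open>v (g + a c)\<close> and \<open>v (h + b c)\<close> were two
distinct new values, then \<open>b (g + a c) - a (h + b c) = b g - a h\<close> would lie in \<open>H\<close> and yet take
one of them. Adjoining \<open>c\<^sub>1, \<dots>, c\<^sub>m\<close> one at a time gives at most \<open>m\<close> new values.\<close>

lemma ext_le_total: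
  assumes "strict_total_order lt"
  shows "ext_le lt a b \<or> ext_le lt b a"
  using assms unfolding strict_total_order_def ext_le_def
  by (cases a; cases b) auto

lemma ext_le_antisym:
  assumes "strict_total_order lt" and "ext_le lt a b" and "ext_le lt b a"
  shows "a = b"
  using assms unfolding strict_total_order_def ext_le_def
  by (cases a; cases b) auto

lemma ext_min_eq_left: "ext_le lt a b \<Longrightarrow> ext_min lt a b = a"
  by (simp add: ext_min_def)

lemma ext_min_cases: "ext_min lt a b = a \<or> ext_min lt a b = b"
  by (simp add: ext_min_def)

locale valued_vector_space = vector_space scale
  for scale :: "'c::field \<Rightarrow> 'g::ab_group_add \<Rightarrow> 'g" +
  fixes lt :: "'w \<Rightarrow> 'w \<Rightarrow> bool" and v :: "'g \<Rightarrow> 'w option"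
  assumes order: "strict_total_order lt"
    and v_add: "ext_le lt (ext_min lt (v x) (v y)) (v (x + y))"
    and v_scale: "a \<noteq> 0 \<Longrightarrow> v (scale a x) = v x"
begin

lemma v_uminus: "v (- x) = v x"
  using v_scale[of "-1" x] by simp

lemma v_add_eq_left:
  assumes le: "ext_le lt (v x) (v y)" and ne: "v x \<noteq> v y"
  shows "v (x + y) = v x"
proof -
  have lower: "ext_le lt (v x) (v (x + y))"
    using v_add[of x y] ext_min_eq_left[OF le] by simp
  have upper: "ext_le lt (ext_min lt (v (x + y)) (v y)) (v x)"
    using v_add[of "x + y" "- y"] v_uminus[of y] by simp
  consider "ext_min lt (v (x + y)) (v y) = v (x + y)" | "ext_min lt (v (x + y)) (v y) = v y"
    using ext_min_cases by blast
  then show ?thesis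
  proof cases
    case 1
    then show ?thesis using lower upper ext_le_antisym[OF order] by metis
  next
    case 2
    then show ?thesis using le ne upper ext_le_antisym[OF order] by metis
  qed
qed

lemma v_add_neq: "v x \<noteq> v y \<Longrightarrow> v (x + y) = v x \<or> v (x + y) = v y"
  using v_add_eq_left[of x y] v_add_eq_left[of y x] ext_le_total[OF order, of "v x" "v y"]
  by (auto simp: add.commute)

lemma one_new_value_add_line:
  assumes "subspace H"
  shows "\<exists>e. v ` {h + scale a c | h a. h \<in> H} \<subseteq> v ` H \<union> {e}"
proof (cases "\<exists>g a. g \<in> H \<and> v (g + scale a c) \<notin> v ` H")
  case False
  then show ?thesis by blast
next
  case True
  then obtain g a where g: "g \<in> H" and new: "v (g + scale a c) \<notin> v ` H" by blast
  have a: "a \<noteq> 0" using g new by auto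
  have "w \<in> v ` H \<union> {v (g + scale a c)}" if "w \<in> v ` {h + scale a c | h a. h \<in> H}" for w
  proof (rule ccontr)
    assume other: "w \<notin> v ` H \<union> {v (g + scale a c)}"
    obtain h b where h: "h \<in> H" and w: "w = v (h + scale b c)"
      using \<open>w \<in> _\<close> by blast
    have b: "b \<noteq> 0" using h w other by auto
    let ?x = "scale b (g + scale a c)" and ?y = "scale (- a) (h + scale b c)"
    have "?x + ?y = scale b g - scale a h"
      by (simp add: scale_right_distrib mult.commute)
    also have "\<dots> \<in> H"
      using assms g h by (simp add: subspace_diff subspace_scale)
    finally have in_vH: "v (?x + ?y) \<in> v ` H" by (rule imageI)
    have "v ?x = v (g + scale a c)" and "v ?y = w"
      using v_scale a b w by (simp_all del: scale_minus_left)
    then have "v (?x + ?y) \<in> {v (g + scale a c), w}"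
      using v_add_neq[of ?x ?y] other by auto
    then show False
      using in_vH new other by auto
  qed
  then show ?thesis by blast
qed

lemma card_new_values_add_span:
  assumes "finite C" and "subspace H"
  shows "finite (v ` {h + x | h x. h \<in> H \<and> x \<in> span C} - v ` H)
    \<and> card (v ` {h + x | h x. h \<in> H \<and> x \<in> span C} - v ` H) \<le> card C"
  using assms(1)
proof (induction C rule: finite_induct)
  case empty
  have "{h + x | h x. h \<in> H \<and> x \<in> span {}} = H" by auto
  then show ?case by simp
next
  case (insert c C)
  let ?H' = "{h + x | h x. h \<in> H \<and> x \<in> span C}"
  let ?H'' = "{h + x | h x. h \<in> H \<and> x \<in> span (insert c C)}"
  have "subspace ?H'" using assms(2) by (simp add: subspace_sums)
  then obtain e where e: "v ` {h + scale a c | h a. h \<in> ?H'} \<subseteq> v ` ?H' \<union> {e}"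
    using one_new_value_add_line by blast
  have "?H'' \<subseteq> {h + scale a c | h a. h \<in> ?H'}"
  proof
    fix y assume "y \<in> ?H''"
    then obtain h x a where "h \<in> H" "y = h + x" "x - scale a c \<in> span C"
      by (auto simp: span_insert)
    then show "y \<in> {h + scale a c | h a. h \<in> ?H'}"
      by (intro CollectI exI[of _ "h + (x - scale a c)"] exI[of _ a]) auto
  qed
  then have "v ` ?H'' \<subseteq> v ` ?H' \<union> {e}"
    using e by (meson image_mono order_trans)
  then have "v ` ?H'' - v ` H \<subseteq> insert e (v ` ?H' - v ` H)" by blast
  moreover have "card (insert e (v ` ?H' - v ` H)) \<le> card (insert c C)"
    using insert by (simp add: card_insert_if)
  ultimately show ?case
    using insert.IH by (meson card_mono finite.insertI finite_subset order_trans)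
qed

end

lemma hamel_space_valued_vector_space:
  "hamel_space scale lt0 lt1 v \<Longrightarrow> valued_vector_space scale lt0 v"
  unfolding hamel_space_def two_ordered_vs_def ordered_vs_def hamel_valuation_def
    valued_vector_space_def valued_vector_space_axioms_def
  by blast

theorem proposition4p4:
  fixes scale :: "'c::linordered_field \<Rightarrow> 'g::ab_group_add \<Rightarrow> 'g"
    and lt0 lt1 :: "'g \<Rightarrow> 'g \<Rightarrow> bool"
    and v :: "'g \<Rightarrow> 'g option"
    and G0 :: "'g set" and c :: "nat \<Rightarrow> 'g" and m :: nat
  assumes "hamel_space scale lt0 lt1 v"
    and "module.subspace scale G0"
    and "\<forall>i\<in>{1..m}. c i \<notin> G0"
  defines "S \<equiv> {g + (\<Sum>i\<in>{1..m}. scale (l i) (c i)) | g l. g \<in> G0}"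
  shows "finite (v ` S - v ` G0) \<and> card (v ` S - v ` G0) \<le> m
    \<and> (\<exists>n d. n \<le> m \<and> inj_on d {1..n} \<and> d ` {1..n} \<subseteq> v ` S - v ` G0
            \<and> v ` S \<subseteq> v ` G0 \<union> d ` {1..n})"
proof -
  interpret valued_vector_space scale lt0 v
    using assms(1) by (rule hamel_space_valued_vector_space)
  let ?T = "{h + x | h x. h \<in> G0 \<and> x \<in> span (c ` {1..m})}"
  let ?N = "v ` S - v ` G0"
  have "S \<subseteq> ?T"
    unfolding S_def by (blast intro: span_sum span_scale span_base)
  then have sub: "?N \<subseteq> v ` ?T - v ` G0" by blast
  have finT: "finite (v ` ?T - v ` G0)" and cardT: "card (v ` ?T - v ` G0) \<le> m"
    using card_new_values_add_span[of "c ` {1..m}" G0] assms(2) card_image_le[of "{1..m}" c]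
    by auto
  have fin: "finite ?N"
    using finite_subset[OF sub finT] .
  have card: "card ?N \<le> m"
    using card_mono[OF finT sub] cardT by linarith
  obtain d where "bij_betw d {1..card ?N} ?N"
    using ex_bij_betw_nat_finite_1[OF fin] by blast
  then have "inj_on d {1..card ?N}" and "d ` {1..card ?N} = ?N"
    by (simp_all add: bij_betw_def)
  then show ?thesis
    using fin card by (intro conjI exI[of _ "card ?N"] exI[of _ d]) auto
qed

end
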